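(* Let $A$ be an $n\times n$ matrix with a blocking of $n_t$ blocks and largest block size $n_b$, and let $A=LR$ be the block LU factorization produced by the block LU algorithm in which every diagonal block $L_{kk}$ is unitary. (a) If $A$ is nonsingular and diagonally dominant by columns (i.e. $|a_{jj}|\ge\sum_{i\ne j}|a_{ij}|$ for all $j$), then $\|L\|_2\le(n_b^{3/2}+1)n_t$. (b) If $A$ is symmetric positive definite, then $\|L\|_2\le(\kappa_2(A)^{1/2}+1)n_t$.
   Context: Blocking: a strictly increasing list $[1=\mathcal{I}_1<\dots<\mathcal{I}_{n_t+1}=n+1]$ defining blocks $A_{i,j}$ (rows $\mathcal{I}_i:\mathcal{I}_{i+1}-1$, columns $\mathcal{I}_j:\mathcal{I}_{j+1}-1$). Block LU algorithm: $A^{(1)}=A$; for $k=1,\dots,n_t$, factor $A^{(k)}_{kk}=L_{kk}R_{kk}$, set $L_{k+1:n_t,k}=A^{(k)}_{k+1:n_t,k}R_{kk}^{-1}$, $R_{k,k+1:n_t}=L_{kk}^{-1}A^{(k)}_{k,k+1:n_t}$, $A^{(k+1)}=A^{(k)}_{k+1:n_t,k+1:n_t}-L_{k+1:n_t,k}R_{k,k+1:n_t}$. $\|\cdot\|_2$ is the spectral norm and $\kappa_2(A)=\|A\|_2\|A^{-1}\|_2$. *)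

theory Defs
  imports Complex_Main "Jordan_Normal_Form.Schur_Decomposition" "Jordan_Normal_Form.DL_Submatrix"
begin

(* Blockings are 0-based: a list I = [I!0 = 0 < I!1 < ... < I!nt = n];
   block k consists of the indices {I!k ..< I!(k+1)}  (k < nt). *)

definition is_blocking :: "nat list \<Rightarrow> nat \<Rightarrow> bool" where
  "is_blocking I n \<longleftrightarrow> length I \<ge> 1 \<and> sorted_wrt (<) I \<and> I ! 0 = 0 \<and> last I = n"

definition num_blocks :: "nat list \<Rightarrow> nat" where
  "num_blocks I = length I - 1"

definition blk :: "nat list \<Rightarrow> nat \<Rightarrow> nat set" where
  "blk I k = {I ! k ..< I ! Suc k}"

definition max_block_size :: "nat list \<Rightarrow> nat" where
  "max_block_size I = Max (insert 0 {I ! Suc k - I ! k | k. k < num_blocks I})"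

definition block :: "'a mat \<Rightarrow> nat list \<Rightarrow> nat \<Rightarrow> nat \<Rightarrow> 'a mat" where
  "block M I i j = submatrix M (blk I i) (blk I j)"

definition unitary_mat :: "complex mat \<Rightarrow> bool" where
  "unitary_mat U \<longleftrightarrow> square_mat U \<and>
     mat_adjoint U * U = 1\<^sub>m (dim_row U) \<and> U * mat_adjoint U = 1\<^sub>m (dim_row U)"

(* Outputs (L, R) of the block LU algorithm with unitary diagonal blocks L_kk.
   S k is the Schur complement A^(k), stored in global coordinates
   (only the trailing rows/columns >= I!k are used). *)
definition block_LU_unitary :: "complex mat \<Rightarrow> nat list \<Rightarrow> complex mat \<Rightarrow> complex mat \<Rightarrow> bool" where
  "block_LU_unitary A I L R \<longleftrightarrow>
    (let n = dim_row A; nt = num_blocks I in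
     L \<in> carrier_mat n n \<and> R \<in> carrier_mat n n \<and>
     (\<forall>i j. i < nt \<and> j < nt \<and> i < j \<longrightarrow>
         block L I i j = 0\<^sub>m (card (blk I i)) (card (blk I j))) \<and>
     (\<forall>i j. i < nt \<and> j < nt \<and> j < i \<longrightarrow>
         block R I i j = 0\<^sub>m (card (blk I i)) (card (blk I j))) \<and>
     (\<exists>S :: nat \<Rightarrow> complex mat.
        S 0 = A \<and>
        (\<forall>k < nt.
           unitary_mat (block L I k k) \<and>
           block (S k) I k k = block L I k k * block R I k k \<and>
           (\<exists>Rinv. inverts_mat (block R I k k) Rinv \<and> inverts_mat Rinv (block R I k k) \<and>
              (\<forall>i. k < i \<and> i < nt \<longrightarrow> block L I i k = block (S k) I i k * Rinv)) \<and>
           (\<exists>Linv. inverts_mat (block L I k k) Linv \<and> inverts_mat Linv (block L I k k) \<and>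
              (\<forall>j. k < j \<and> j < nt \<longrightarrow> block R I k j = Linv * block (S k) I k j)) \<and>
           S (Suc k) = mat n n (\<lambda>(i, j).
              if I ! Suc k \<le> i \<and> I ! Suc k \<le> j
              then S k $$ (i, j) - (\<Sum>l\<in>blk I k. L $$ (i, l) * R $$ (l, j))
              else 0))))"

definition vec_norm2 :: "complex vec \<Rightarrow> real" where
  "vec_norm2 x = sqrt (\<Sum>i<dim_vec x. (cmod (x $ i))\<^sup>2)"

definition spec_norm :: "complex mat \<Rightarrow> real" where
  "spec_norm M = Sup {vec_norm2 (M *\<^sub>v x) | x. x \<in> carrier_vec (dim_col M) \<and> vec_norm2 x \<le> 1}"

definition mat_inv :: "complex mat \<Rightarrow> complex mat" where
  "mat_inv A = (SOME B. B \<in> carrier_mat (dim_row A) (dim_row A) \<and> inverts_mat A B \<and> inverts_mat B A)"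

definition cond2 :: "complex mat \<Rightarrow> real" where
  "cond2 A = spec_norm A * spec_norm (mat_inv A)"

definition diag_dom_cols :: "complex mat \<Rightarrow> bool" where
  "diag_dom_cols A \<longleftrightarrow> (\<forall>j < dim_col A.
     (\<Sum>i \<in> {0..<dim_row A} - {j}. cmod (A $$ (i, j))) \<le> cmod (A $$ (j, j)))"

definition spd :: "complex mat \<Rightarrow> bool" where
  "spd A \<longleftrightarrow> square_mat A \<and> mat_adjoint A = A \<and>
     (\<forall>x \<in> carrier_vec (dim_row A). x \<noteq> 0\<^sub>v (dim_row A) \<longrightarrow>
        Re (\<Sum>i<dim_row A. cnj (x $ i) * (A *\<^sub>v x) $ i) > 0)"

end

(* Write L as the sum of its block columns L(:,k) = [0; L_kk; L_(>k,k)], so that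
   ||L|| <= n_t max_k ||L(:,k)||.  Since L_kk is unitary, L_kk w has the norm of w, and below the
   diagonal L_(>k,k) w = S_k(>k,k) z, where S_k is the k-th Schur complement and S_k(k,k) z = L_kk w.

   (a) Column diagonal dominance is inherited by all Schur complements, and for a column dominant
   S_k the 1-norm of S_k(>k,k) z is at most that of S_k(k,k) z = L_kk w, hence at most
   sqrt(n_b) ||w||.  So ||L(:,k)|| <= 1 + sqrt(n_b) <= 1 + n_b^(3/2).

   (b) L(:,k) w = A v for some v supported on the blocks 1..k.  For Hermitian positive definite A,
   Cauchy-Schwarz for the form v* A v gives ||A v||^2 <= ||A|| v* A v and
   ||v||^2 <= ||A^-1|| v* A v, while v* A v = v_k* L_kk w <= ||v|| ||w||.
   So ||L(:,k)|| <= kappa(A)^(1/2). *)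

theory Submission
  imports Defs "HOL-Analysis.L2_Norm"
begin

lemma sum_mult_sum_swap:
  fixes a :: "'i \<Rightarrow> 'a::semiring_0"
  shows "(\<Sum>l\<in>X. a l * (\<Sum>j\<in>Y. b l j * u j)) = (\<Sum>j\<in>Y. (\<Sum>l\<in>X. a l * b l j) * u j)"
proof -
  have "(\<Sum>l\<in>X. a l * (\<Sum>j\<in>Y. b l j * u j)) = (\<Sum>l\<in>X. \<Sum>j\<in>Y. a l * b l j * u j)"
    by (simp add: sum_distrib_left mult.assoc)
  also have "\<dots> = (\<Sum>j\<in>Y. \<Sum>l\<in>X. a l * b l j * u j)" by (rule sum.swap)
  also have "\<dots> = (\<Sum>j\<in>Y. (\<Sum>l\<in>X. a l * b l j) * u j)" by (simp add: sum_distrib_right)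
  finally show ?thesis .
qed

lemma index_mult_mat_sum:
  assumes "X \<in> carrier_mat r m" "Y \<in> carrier_mat m s" "i < r" "j < s"
  shows "(X * Y) $$ (i,j) = (\<Sum>l<m. X $$ (i,l) * Y $$ (l,j))"
  using assms by (simp add: scalar_prod_def atLeast0LessThan)

lemma vec_norm2_L2_set: "vec_norm2 x = L2_set (\<lambda>i. cmod (x $ i)) {..<dim_vec x}"
  unfolding vec_norm2_def L2_set_def by simp

lemma L2_set_mono_subset:
  assumes "finite Y" "X \<subseteq> Y"
  shows "L2_set f X \<le> L2_set f Y"
  unfolding L2_set_def by (rule real_sqrt_le_mono, rule sum_mono2) (use assms in auto)

lemma L2_set_sum_le:
  fixes G :: "'k \<Rightarrow> 'i \<Rightarrow> complex"
  assumes "finite K"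
  shows "L2_set (\<lambda>i. cmod (\<Sum>k\<in>K. G k i)) X \<le> (\<Sum>k\<in>K. L2_set (\<lambda>i. cmod (G k i)) X)"
  using assms
proof (induction K rule: finite_induct)
  case (insert a K)
  have "L2_set (\<lambda>i. cmod (\<Sum>k\<in>insert a K. G k i)) X
      \<le> L2_set (\<lambda>i. cmod (G a i) + cmod (\<Sum>k\<in>K. G k i)) X"
    using insert.hyps by (intro L2_set_mono) (simp_all add: norm_triangle_ineq)
  also have "\<dots> \<le> L2_set (\<lambda>i. cmod (G a i)) X + L2_set (\<lambda>i. cmod (\<Sum>k\<in>K. G k i)) X"
    by (rule L2_set_triangle_ineq)
  finally show ?case using insert by simp
qed (simp add: L2_set_def)

lemma L2_set_cmod_square: "(L2_set (\<lambda>i. cmod (f i)) X)\<^sup>2 = Re (\<Sum>i\<in>X. cnj (f i) * f i)"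
proof -
  have "(L2_set (\<lambda>i. cmod (f i)) X)\<^sup>2 = (\<Sum>i\<in>X. (cmod (f i))\<^sup>2)"
    unfolding L2_set_def by (simp add: sum_nonneg)
  also have "\<dots> = Re (\<Sum>i\<in>X. cnj (f i) * f i)"
    unfolding Re_sum by (rule sum.cong) (simp_all add: complex_mult_cnj cmod_power2 power2_eq_square[symmetric])
  finally show ?thesis .
qed

lemma Re_inner_le_L2_set:
  "\<bar>Re (\<Sum>i\<in>X. cnj (f i) * g i)\<bar> \<le> L2_set (\<lambda>i. cmod (f i)) X * L2_set (\<lambda>i. cmod (g i)) X"
proof -
  have "\<bar>Re (\<Sum>i\<in>X. cnj (f i) * g i)\<bar> \<le> (\<Sum>i\<in>X. \<bar>cmod (f i)\<bar> * \<bar>cmod (g i)\<bar>)"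
    by (rule order.trans[OF abs_Re_le_cmod], rule order.trans[OF norm_sum]) (simp add: norm_mult)
  also have "\<dots> \<le> L2_set (\<lambda>i. cmod (f i)) X * L2_set (\<lambda>i. cmod (g i)) X"
    by (rule L2_set_mult_ineq)
  finally show ?thesis .
qed

lemma sum_offdiag_swap:
  assumes "finite B"
  shows "(\<Sum>c\<in>B. \<Sum>i\<in>B-{c}. f i c) = (\<Sum>i\<in>B. \<Sum>c\<in>B-{i}. f i c)"
proof -
  have "(\<Sum>c\<in>B. \<Sum>i\<in>B-{c}. f i c) = (\<Sum>c\<in>B. \<Sum>i\<in>{i\<in>B. i \<noteq> c}. f i c)"
    by (intro sum.cong) auto
  also have "\<dots> = (\<Sum>i\<in>B. \<Sum>c\<in>{c\<in>B. i \<noteq> c}. f i c)"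
    by (rule sum.swap_restrict[OF assms assms])
  also have "\<dots> = (\<Sum>i\<in>B. \<Sum>c\<in>B-{i}. f i c)"
    by (intro sum.cong) auto
  finally show ?thesis .
qed

lemma sqrt_le_powr_three_halves: "sqrt (real m) \<le> real m powr (3/2)"
proof (cases "m = 0")
  case False
  then have "sqrt (real m) = real m powr (1/2)" by (simp add: powr_half_sqrt)
  also have "\<dots> \<le> real m powr (3/2)" using False by (intro powr_mono) auto
  finally show ?thesis .
qed simp

section \<open>The spectral norm\<close>

lemma vec_norm2_mult_mat_vec:
  assumes "M \<in> carrier_mat n n"
  shows "vec_norm2 (M *\<^sub>v vec n f) = L2_set (\<lambda>i. cmod (\<Sum>j<n. M $$ (i,j) * f j)) {..<n}"
  unfolding vec_norm2_L2_set using assms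
  by (intro L2_set_cong) (auto simp: scalar_prod_def atLeast0LessThan)

lemma spec_norm_leI:
  assumes M: "M \<in> carrier_mat n n" and "0 \<le> K"
    and bound: "\<And>f. L2_set (\<lambda>i. cmod (\<Sum>j<n. M $$ (i,j) * f j)) {..<n} \<le> K * L2_set (\<lambda>i. cmod (f i)) {..<n}"
  shows "spec_norm M \<le> K"
  unfolding spec_norm_def
proof (rule cSup_least)
  show "{vec_norm2 (M *\<^sub>v x) |x. x \<in> carrier_vec (dim_col M) \<and> vec_norm2 x \<le> 1} \<noteq> {}"
    by (auto intro!: exI[of _ "0\<^sub>v (dim_col M)"] simp: vec_norm2_def)
next
  fix y assume "y \<in> {vec_norm2 (M *\<^sub>v x) |x. x \<in> carrier_vec (dim_col M) \<and> vec_norm2 x \<le> 1}"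
  then obtain x where x: "x \<in> carrier_vec n" "vec_norm2 x \<le> 1" and y: "y = vec_norm2 (M *\<^sub>v x)"
    using M by auto
  have "x = vec n (\<lambda>j. x $ j)" using x by auto
  then have "y = L2_set (\<lambda>i. cmod (\<Sum>j<n. M $$ (i,j) * x $ j)) {..<n}"
    using y vec_norm2_mult_mat_vec[OF M] by metis
  also have "\<dots> \<le> K * L2_set (\<lambda>i. cmod (x $ i)) {..<n}" by (rule bound)
  also have "\<dots> \<le> K" using x \<open>0 \<le> K\<close> by (intro mult_left_le) (auto simp: vec_norm2_L2_set)
  finally show "y \<le> K" .
qed

lemma spec_norm_set_bdd_above:
  assumes M: "M \<in> carrier_mat n n"
  shows "bdd_above {vec_norm2 (M *\<^sub>v x) |x. x \<in> carrier_vec (dim_col M) \<and> vec_norm2 x \<le> 1}"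
proof (rule bdd_aboveI)
  fix y assume "y \<in> {vec_norm2 (M *\<^sub>v x) |x. x \<in> carrier_vec (dim_col M) \<and> vec_norm2 x \<le> 1}"
  then obtain x where x: "x \<in> carrier_vec n" "vec_norm2 x \<le> 1" and y: "y = vec_norm2 (M *\<^sub>v x)"
    using M by auto
  have x_le_1: "cmod (x $ j) \<le> 1" if "j < n" for j
    using member_le_L2_set[of "{..<n}" j "\<lambda>i. cmod (x $ i)"] x that by (simp add: vec_norm2_L2_set)
  have "x = vec n (\<lambda>j. x $ j)" using x by auto
  then have "y = L2_set (\<lambda>i. cmod (\<Sum>j<n. M $$ (i,j) * x $ j)) {..<n}"
    using y vec_norm2_mult_mat_vec[OF M] by metis
  also have "\<dots> \<le> (\<Sum>i<n. cmod (\<Sum>j<n. M $$ (i,j) * x $ j))" by (rule L2_set_le_sum) simp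
  also have "\<dots> \<le> (\<Sum>i<n. \<Sum>j<n. cmod (M $$ (i,j)))"
    by (intro sum_mono order.trans[OF norm_sum])
       (auto simp: norm_mult intro: mult_left_le x_le_1)
  finally show "y \<le> (\<Sum>i<n. \<Sum>j<n. cmod (M $$ (i,j)))" .
qed

lemma spec_norm_nonneg:
  assumes "M \<in> carrier_mat n n"
  shows "0 \<le> spec_norm M"
proof -
  have "vec_norm2 (M *\<^sub>v 0\<^sub>v n) = 0" using assms by (simp add: vec_norm2_def)
  moreover have "vec_norm2 (M *\<^sub>v 0\<^sub>v n) \<le> spec_norm M"
    unfolding spec_norm_def using assms
    by (intro cSup_upper[OF _ spec_norm_set_bdd_above[OF assms]] CollectI exI[of _ "0\<^sub>v n"])
       (simp add: vec_norm2_def)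
  ultimately show ?thesis by simp
qed

lemma L2_set_mult_le_spec_norm:
  assumes M: "M \<in> carrier_mat n n"
  shows "L2_set (\<lambda>i. cmod (\<Sum>j<n. M $$ (i,j) * f j)) {..<n} \<le> spec_norm M * L2_set (\<lambda>i. cmod (f i)) {..<n}"
proof (cases "L2_set (\<lambda>i. cmod (f i)) {..<n} = 0")
  case True
  then have "\<forall>j<n. f j = 0" by (simp add: L2_set_eq_0_iff)
  then show ?thesis by (simp add: L2_set_def)
next
  case False
  define r where "r = L2_set (\<lambda>i. cmod (f i)) {..<n}"
  have r: "r > 0" using False L2_set_nonneg r_def by (metis less_eq_real_def)
  define g where "g j = f j / complex_of_real r" for j
  have scale: "L2_set (\<lambda>i. cmod (h i / complex_of_real r)) {..<n} = L2_set (\<lambda>i. cmod (h i)) {..<n} / r"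
    for h :: "nat \<Rightarrow> complex"
    using L2_set_left_distrib[of "1/r" "\<lambda>i. cmod (h i)" "{..<n}"] r by (simp add: norm_divide)
  have "vec_norm2 (vec n g) = L2_set (\<lambda>i. cmod (g i)) {..<n}"
    unfolding vec_norm2_L2_set by (intro L2_set_cong) auto
  then have "vec_norm2 (vec n g) = 1"
    using scale[of f] r by (simp add: g_def r_def)
  then have "vec_norm2 (M *\<^sub>v vec n g) \<le> spec_norm M"
    unfolding spec_norm_def using M
    by (intro cSup_upper[OF _ spec_norm_set_bdd_above[OF M]]) auto
  moreover have "(\<Sum>j<n. M $$ (i,j) * g j) = (\<Sum>j<n. M $$ (i,j) * f j) / complex_of_real r" for i
    unfolding g_def by (simp add: sum_divide_distrib)
  ultimately have "L2_set (\<lambda>i. cmod (\<Sum>j<n. M $$ (i,j) * f j)) {..<n} / r \<le> spec_norm M"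
    using scale vec_norm2_mult_mat_vec[OF M] by simp
  then show ?thesis using r by (simp add: r_def field_simps)
qed

section \<open>Hermitian positive semidefinite forms\<close>

definition sesq_form :: "nat \<Rightarrow> complex mat \<Rightarrow> (nat \<Rightarrow> complex) \<Rightarrow> (nat \<Rightarrow> complex) \<Rightarrow> complex" where
  "sesq_form n A f g = (\<Sum>i<n. cnj (f i) * (\<Sum>j<n. A $$ (i,j) * g j))"

lemma quadratic_nonneg_discriminant:
  fixes a b c :: real
  assumes nonneg: "\<And>t. 0 \<le> a + 2 * b * t + c * t\<^sup>2" and "0 \<le> c"
  shows "b\<^sup>2 \<le> a * c"
proof (cases "c = 0")
  case True
  show ?thesis
  proof (cases "b = 0")
    case False
    have "0 \<le> a + 2 * b * (- (a + 1) / (2 * b)) + c * (- (a + 1) / (2 * b))\<^sup>2" by (rule nonneg)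
    with True False show ?thesis by (simp add: field_simps)
  qed (simp add: True)
next
  case False
  then have c: "c > 0" using \<open>0 \<le> c\<close> by simp
  have "0 \<le> a + 2 * b * (- b / c) + c * (- b / c)\<^sup>2" by (rule nonneg)
  then have "b\<^sup>2 / c \<le> a" using c by (simp add: power2_eq_square field_simps)
  then show ?thesis using c by (simp add: field_simps mult.commute)
qed

lemma sesq_form_swap:
  assumes herm: "\<And>i j. i < n \<Longrightarrow> j < n \<Longrightarrow> A $$ (i,j) = cnj (A $$ (j,i))"
  shows "sesq_form n A g f = cnj (sesq_form n A f g)"
proof -
  have "cnj (sesq_form n A f g) = (\<Sum>i<n. \<Sum>j<n. f i * cnj (A $$ (i,j)) * cnj (g j))"
    unfolding sesq_form_def by (simp add: sum_distrib_left mult.assoc)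
  also have "\<dots> = (\<Sum>i<n. \<Sum>j<n. cnj (g j) * A $$ (j,i) * f i)"
    by (intro sum.cong refl) (subst herm, auto)
  also have "\<dots> = (\<Sum>j<n. \<Sum>i<n. cnj (g j) * A $$ (j,i) * f i)" by (rule sum.swap)
  also have "\<dots> = sesq_form n A g f" unfolding sesq_form_def by (simp add: sum_distrib_left mult.assoc)
  finally show ?thesis by simp
qed

context
  fixes n :: nat and A :: "complex mat"
  assumes herm: "\<And>i j. i < n \<Longrightarrow> j < n \<Longrightarrow> A $$ (i,j) = cnj (A $$ (j,i))"
    and psd: "\<And>f. 0 \<le> Re (sesq_form n A f f)"
begin

lemma sesq_form_Cauchy_Schwarz: "(Re (sesq_form n A f g))\<^sup>2 \<le> Re (sesq_form n A f f) * Re (sesq_form n A g g)"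
proof (rule quadratic_nonneg_discriminant)
  fix t :: real
  have expand: "sesq_form n A (\<lambda>i. f i + of_real t * g i) (\<lambda>i. f i + of_real t * g i)
     = sesq_form n A f f + of_real t * sesq_form n A f g + of_real t * sesq_form n A g f
       + of_real t * of_real t * sesq_form n A g g"
    unfolding sesq_form_def by (simp add: algebra_simps sum.distrib sum_distrib_left)
  have "Re (sesq_form n A g f) = Re (sesq_form n A f g)" using sesq_form_swap[of n A f g, OF herm] by simp
  with expand psd[of "\<lambda>i. f i + of_real t * g i"]
  show "0 \<le> Re (sesq_form n A f f) + 2 * Re (sesq_form n A f g) * t + Re (sesq_form n A g g) * t\<^sup>2"
    by (simp add: power2_eq_square algebra_simps)
qed (rule psd)

lemma sesq_form_square_bound:
  assumes "0 \<le> c" and hv: "Re (sesq_form n A h v) = N\<^sup>2" and hh: "Re (sesq_form n A h h) \<le> c * N\<^sup>2"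
  shows "N\<^sup>2 \<le> c * Re (sesq_form n A v v)"
proof (cases "N = 0")
  case True
  then show ?thesis using \<open>0 \<le> c\<close> psd by simp
next
  case False
  have "N\<^sup>2 * N\<^sup>2 \<le> Re (sesq_form n A h h) * Re (sesq_form n A v v)"
    using sesq_form_Cauchy_Schwarz[of h v] hv by (simp add: power2_eq_square)
  also have "\<dots> \<le> (c * N\<^sup>2) * Re (sesq_form n A v v)" by (rule mult_right_mono[OF hh psd])
  finally have "N\<^sup>2 * N\<^sup>2 \<le> N\<^sup>2 * (c * Re (sesq_form n A v v))" by (simp add: algebra_simps)
  moreover have "N\<^sup>2 > 0" using False by simp
  ultimately show ?thesis by (rule mult_left_le_imp_le)
qed

lemma L2_set_mult_square_le_sesq_form:
  assumes "0 \<le> \<alpha>"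
    and norm_A: "\<And>f. L2_set (\<lambda>i. cmod (\<Sum>j<n. A $$ (i,j) * f j)) {..<n} \<le> \<alpha> * L2_set (\<lambda>i. cmod (f i)) {..<n}"
  shows "(L2_set (\<lambda>i. cmod (\<Sum>j<n. A $$ (i,j) * v j)) {..<n})\<^sup>2 \<le> \<alpha> * Re (sesq_form n A v v)"
proof (rule sesq_form_square_bound[OF \<open>0 \<le> \<alpha>\<close>])
  define h where "h i = (\<Sum>j<n. A $$ (i,j) * v j)" for i
  let ?N = "L2_set (\<lambda>i. cmod (h i)) {..<n}"
  show "Re (sesq_form n A h v) = ?N\<^sup>2" unfolding sesq_form_def L2_set_cmod_square h_def ..
  have "Re (sesq_form n A h h) \<le> ?N * L2_set (\<lambda>i. cmod (\<Sum>j<n. A $$ (i,j) * h j)) {..<n}"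
    unfolding sesq_form_def using Re_inner_le_L2_set[of h _ "{..<n}"] by (meson abs_le_D1)
  also have "\<dots> \<le> ?N * (\<alpha> * ?N)" by (intro mult_left_mono norm_A) simp
  finally show "Re (sesq_form n A h h) \<le> \<alpha> * ?N\<^sup>2" by (simp add: power2_eq_square algebra_simps)
qed

lemma L2_set_square_le_sesq_form:
  assumes "0 \<le> \<beta>"
    and inverse: "\<And>i l. i < n \<Longrightarrow> l < n \<Longrightarrow> (\<Sum>j<n. A $$ (i,j) * Ainv $$ (j,l)) = (if i = l then 1 else 0)"
    and norm_Ainv: "\<And>f. L2_set (\<lambda>i. cmod (\<Sum>j<n. Ainv $$ (i,j) * f j)) {..<n} \<le> \<beta> * L2_set (\<lambda>i. cmod (f i)) {..<n}"
  shows "(L2_set (\<lambda>i. cmod (v i)) {..<n})\<^sup>2 \<le> \<beta> * Re (sesq_form n A v v)"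
proof (rule sesq_form_square_bound[OF \<open>0 \<le> \<beta>\<close>])
  define h where "h i = (\<Sum>l<n. Ainv $$ (i,l) * v l)" for i
  let ?N = "L2_set (\<lambda>i. cmod (v i)) {..<n}"
  have Ah: "(\<Sum>j<n. A $$ (i,j) * h j) = v i" if "i < n" for i
  proof -
    have "(\<Sum>j<n. A $$ (i,j) * h j) = (\<Sum>l<n. (\<Sum>j<n. A $$ (i,j) * Ainv $$ (j,l)) * v l)"
      unfolding h_def by (rule sum_mult_sum_swap)
    also have "\<dots> = (\<Sum>l<n. if i = l then v l else 0)" using that by (intro sum.cong) (auto simp: inverse)
    also have "\<dots> = v i" using that by simp
    finally show ?thesis .
  qed
  have "Re (sesq_form n A v h) = ?N\<^sup>2" unfolding sesq_form_def L2_set_cmod_square by (simp add: Ah)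
  then show "Re (sesq_form n A h v) = ?N\<^sup>2" using sesq_form_swap[of n A v h, OF herm] by simp
  have "Re (sesq_form n A h h) = Re (\<Sum>i<n. cnj (h i) * v i)" unfolding sesq_form_def by (simp add: Ah)
  also have "\<dots> \<le> L2_set (\<lambda>i. cmod (h i)) {..<n} * ?N" using Re_inner_le_L2_set[of h v] by (meson abs_le_D1)
  also have "\<dots> \<le> (\<beta> * ?N) * ?N" unfolding h_def by (intro mult_right_mono norm_Ainv) simp
  finally show "Re (sesq_form n A h h) \<le> \<beta> * ?N\<^sup>2" by (simp add: power2_eq_square)
qed

lemma L2_set_le_of_sesq_form_le:
  assumes "0 \<le> \<beta>" "0 \<le> Y"
    and inverse: "\<And>i l. i < n \<Longrightarrow> l < n \<Longrightarrow> (\<Sum>j<n. A $$ (i,j) * Ainv $$ (j,l)) = (if i = l then 1 else 0)"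
    and norm_Ainv: "\<And>f. L2_set (\<lambda>i. cmod (\<Sum>j<n. Ainv $$ (i,j) * f j)) {..<n} \<le> \<beta> * L2_set (\<lambda>i. cmod (f i)) {..<n}"
    and form_le: "Re (sesq_form n A v v) \<le> L2_set (\<lambda>i. cmod (v i)) {..<n} * Y"
  shows "L2_set (\<lambda>i. cmod (v i)) {..<n} \<le> \<beta> * Y"
proof (cases "L2_set (\<lambda>i. cmod (v i)) {..<n} = 0")
  case False
  let ?V = "L2_set (\<lambda>i. cmod (v i)) {..<n}"
  have "?V > 0" using False by (metis L2_set_nonneg less_eq_real_def)
  moreover have "?V * ?V \<le> ?V * (\<beta> * Y)"
    using L2_set_square_le_sesq_form[OF \<open>0 \<le> \<beta>\<close> inverse norm_Ainv, of v] mult_left_mono[OF form_le \<open>0 \<le> \<beta>\<close>]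
    by (simp add: power2_eq_square algebra_simps)
  ultimately show ?thesis by simp
qed (simp add: \<open>0 \<le> \<beta>\<close> \<open>0 \<le> Y\<close>)

end

lemma spd_hermitian:
  assumes "spd A" "A \<in> carrier_mat n n" "i < n" "j < n"
  shows "A $$ (i,j) = cnj (A $$ (j,i))"
proof -
  have "A $$ (i,j) = mat_adjoint A $$ (i,j)" using \<open>spd A\<close> by (simp add: spd_def)
  then show ?thesis using assms by (simp add: mat_adjoint_def mat_of_rows_index)
qed

lemma spd_pos:
  assumes "spd A" "A \<in> carrier_mat n n" "x \<in> carrier_vec n" "x \<noteq> 0\<^sub>v n"
  shows "0 < Re (\<Sum>i<n. cnj (x $ i) * (A *\<^sub>v x) $ i)"
  using assms unfolding spd_def by (metis carrier_matD(1))

lemma spd_sesq_form_nonneg: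
  assumes "spd A" "A \<in> carrier_mat n n"
  shows "0 \<le> Re (sesq_form n A f f)"
proof (cases "\<forall>i<n. f i = 0")
  case False
  then have "vec n f \<noteq> 0\<^sub>v n" by (metis index_vec index_zero_vec(1))
  moreover have "sesq_form n A f f = (\<Sum>i<n. cnj (vec n f $ i) * (A *\<^sub>v vec n f) $ i)"
    unfolding sesq_form_def using assms(2) by (intro sum.cong) (auto simp: scalar_prod_def atLeast0LessThan)
  ultimately show ?thesis using spd_pos[OF assms] by (metis less_imp_le vec_carrier)
qed (simp add: sesq_form_def)

lemma spd_mat_inv:
  assumes "spd A" and A: "A \<in> carrier_mat n n"
  shows "mat_inv A \<in> carrier_mat n n" "A * mat_inv A = 1\<^sub>m n"
proof -
  have "det A \<noteq> 0"
  proof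
    assume "det A = 0"
    then obtain v where v: "v \<in> carrier_vec n" "v \<noteq> 0\<^sub>v n" "A *\<^sub>v v = 0\<^sub>v n"
      using det_0_iff_vec_prod_zero[OF A] by blast
    then show False using spd_pos[OF assms v(1,2)] by simp
  qed
  then obtain B where "B \<in> carrier_mat n n" "B * A = 1\<^sub>m n" "A * B = 1\<^sub>m n"
    using det_non_zero_imp_unit[OF A, of "()"] unfolding Units_def ring_mat_def by auto
  then have "\<exists>B. B \<in> carrier_mat (dim_row A) (dim_row A) \<and> inverts_mat A B \<and> inverts_mat B A"
    using A unfolding inverts_mat_def by auto
  from someI_ex[OF this] show "mat_inv A \<in> carrier_mat n n" "A * mat_inv A = 1\<^sub>m n"
    using A unfolding mat_inv_def inverts_mat_def by auto
qed

section \<open>Block LU factorizations, entrywise\<close>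

text \<open>Block \<open>k\<close> consists of the indices \<open>{p k..<p (Suc k)}\<close>, and all matrices are kept in global
  \<open>n \<times> n\<close> coordinates: \<open>S k\<close> is the \<open>k\<close>-th Schur complement \<open>A\<^sup>(\<^sup>k\<^sup>)\<close> (only its entries with
  both indices \<open>\<ge> p k\<close> matter) and \<open>Rinv k c l\<close> is the entry of \<open>R\<^sub>k\<^sub>k\<^sup>-\<^sup>1\<close> at global position \<open>(c, l)\<close>.\<close>

locale block_LU =
  fixes n nt :: nat and p :: "nat \<Rightarrow> nat" and A L R :: "complex mat"
    and S :: "nat \<Rightarrow> complex mat" and Rinv :: "nat \<Rightarrow> nat \<Rightarrow> nat \<Rightarrow> complex"
  assumes p_0: "p 0 = 0" and p_nt: "p nt = n"
    and p_strict_mono: "\<And>i j. i < j \<Longrightarrow> j \<le> nt \<Longrightarrow> p i < p j"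
    and A_carrier: "A \<in> carrier_mat n n" and L_carrier: "L \<in> carrier_mat n n"
    and S_0: "\<And>i j. i < n \<Longrightarrow> j < n \<Longrightarrow> S 0 $$ (i,j) = A $$ (i,j)"
    and S_Suc: "\<And>k i j. k < nt \<Longrightarrow> p (Suc k) \<le> i \<Longrightarrow> i < n \<Longrightarrow> p (Suc k) \<le> j \<Longrightarrow> j < n \<Longrightarrow>
       S (Suc k) $$ (i,j) = S k $$ (i,j) - (\<Sum>l\<in>{p k..<p (Suc k)}. L $$ (i,l) * R $$ (l,j))"
    and S_row_block: "\<And>k a j. k < nt \<Longrightarrow> a \<in> {p k..<p (Suc k)} \<Longrightarrow> p k \<le> j \<Longrightarrow> j < n \<Longrightarrow>
       S k $$ (a,j) = (\<Sum>l\<in>{p k..<p (Suc k)}. L $$ (a,l) * R $$ (l,j))"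
    and L_col_block: "\<And>k i l. k < nt \<Longrightarrow> p k \<le> i \<Longrightarrow> i < n \<Longrightarrow> l \<in> {p k..<p (Suc k)} \<Longrightarrow>
       L $$ (i,l) = (\<Sum>c\<in>{p k..<p (Suc k)}. S k $$ (i,c) * Rinv k c l)"
    and L_diag_block_unitary: "\<And>k a b. k < nt \<Longrightarrow> a \<in> {p k..<p (Suc k)} \<Longrightarrow> b \<in> {p k..<p (Suc k)} \<Longrightarrow>
       (\<Sum>i\<in>{p k..<p (Suc k)}. cnj (L $$ (i,a)) * L $$ (i,b)) = (if a = b then 1 else 0)"
    and L_upper_zero: "\<And>k i l. k < nt \<Longrightarrow> i < p k \<Longrightarrow> l \<in> {p k..<p (Suc k)} \<Longrightarrow> L $$ (i,l) = 0"
begin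

lemma p_mono: "i \<le> j \<Longrightarrow> j \<le> nt \<Longrightarrow> p i \<le> p j"
  using p_strict_mono[of i j] by (cases "i = j") auto

lemma p_le_n: "k \<le> nt \<Longrightarrow> p k \<le> n"
  using p_mono[of k nt] p_nt by simp

lemma sum_split_block:
  assumes "k < nt"
  shows "(\<Sum>c\<in>{p k..<n}. f c) = (\<Sum>c\<in>{p k..<p (Suc k)}. f c) + (\<Sum>c\<in>{p (Suc k)..<n}. f c)"
  using sum.atLeastLessThan_concat[of "p k" "p (Suc k)" n f] p_mono[of k "Suc k"] p_le_n[of "Suc k"] assms
  by simp

lemma sum_lessThan_split_block:
  fixes f :: "nat \<Rightarrow> 'a::comm_monoid_add"
  assumes k: "k < nt" and zero: "\<And>i. i < p k \<Longrightarrow> f i = 0"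
  shows "(\<Sum>i<n. f i) = (\<Sum>i\<in>{p k..<p (Suc k)}. f i) + (\<Sum>i\<in>{p (Suc k)..<n}. f i)"
proof -
  have "(\<Sum>i<n. f i) = (\<Sum>i\<in>{0..<p k}. f i) + (\<Sum>i\<in>{p k..<n}. f i)"
    using sum.atLeastLessThan_concat[of 0 "p k" n f] p_le_n[of k] k by (simp add: atLeast0LessThan)
  then show ?thesis using zero sum_split_block[OF k] by simp
qed

lemma sum_lessThan_blocks: "(\<Sum>j<n. f j) = (\<Sum>k<nt. \<Sum>j\<in>{p k..<p (Suc k)}. f j)"
proof -
  have "(\<Sum>j\<in>{0..<p m}. f j) = (\<Sum>k<m. \<Sum>j\<in>{p k..<p (Suc k)}. f j)" if "m \<le> nt" for m
    using that
  proof (induction m)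
    case (Suc m)
    then show ?case
      using sum.atLeastLessThan_concat[of 0 "p m" "p (Suc m)" f] p_mono[of m "Suc m"] by simp
  qed (simp add: p_0)
  from this[of nt] show ?thesis by (simp add: p_nt atLeast0LessThan)
qed

lemma S_block_col_mult_Rinv:
  assumes "k < nt" "p k \<le> i" "i < n"
  shows "(\<Sum>c\<in>{p k..<p (Suc k)}. S k $$ (i,c) * (\<Sum>l\<in>{p k..<p (Suc k)}. Rinv k c l * q l))
       = (\<Sum>l\<in>{p k..<p (Suc k)}. L $$ (i,l) * q l)"
  unfolding sum_mult_sum_swap using assms by (intro sum.cong refl) (simp add: L_col_block)

lemma L_diag_block_mult_R:
  assumes "k < nt" "a \<in> {p k..<p (Suc k)}"
  shows "(\<Sum>l\<in>{p k..<p (Suc k)}. L $$ (a,l) * (\<Sum>j\<in>{p (Suc k)..<n}. R $$ (l,j) * u j))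
       = (\<Sum>j\<in>{p (Suc k)..<n}. S k $$ (a,j) * u j)"
  unfolding sum_mult_sum_swap using assms p_mono[of k "Suc k"]
  by (intro sum.cong refl) (simp add: S_row_block)

lemma Schur_complement_step:
  assumes k: "k < nt"
  obtains u' where "\<And>c. p (Suc k) \<le> c \<Longrightarrow> u' c = u c"
    and "\<And>i. i \<in> {p k..<p (Suc k)} \<Longrightarrow> (\<Sum>c\<in>{p k..<n}. S k $$ (i,c) * u' c) = 0"
    and "\<And>i. p (Suc k) \<le> i \<Longrightarrow> i < n \<Longrightarrow>
      (\<Sum>c\<in>{p k..<n}. S k $$ (i,c) * u' c) = (\<Sum>c\<in>{p (Suc k)..<n}. S (Suc k) $$ (i,c) * u c)"
proof -
  let ?B = "{p k..<p (Suc k)}" and ?T = "{p (Suc k)..<n}"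
  \<comment> \<open>on block \<open>k\<close>, \<open>u' = - R\<^sub>k\<^sub>k\<^sup>-\<^sup>1 R\<^sub>k\<^sub>,\<^sub>>\<^sub>k u\<close>\<close>
  define q where "q l = (\<Sum>j\<in>?T. R $$ (l,j) * u j)" for l
  define u' where "u' c = (if c \<in> ?B then - (\<Sum>l\<in>?B. Rinv k c l * q l) else u c)" for c
  have S_u': "(\<Sum>c\<in>{p k..<n}. S k $$ (i,c) * u' c)
      = (\<Sum>c\<in>?T. S k $$ (i,c) * u c) - (\<Sum>l\<in>?B. L $$ (i,l) * q l)"
    if i: "p k \<le> i" "i < n" for i
  proof -
    have "(\<Sum>c\<in>?B. S k $$ (i,c) * u' c) = - (\<Sum>c\<in>?B. S k $$ (i,c) * (\<Sum>l\<in>?B. Rinv k c l * q l))"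
      unfolding sum_negf[symmetric] by (rule sum.cong) (auto simp: u'_def)
    also have "\<dots> = - (\<Sum>l\<in>?B. L $$ (i,l) * q l)" using S_block_col_mult_Rinv[OF k i] by simp
    finally show ?thesis
      using sum_split_block[OF k, of "\<lambda>c. S k $$ (i,c) * u' c"] by (simp add: u'_def)
  qed
  show ?thesis
  proof
    show "u' c = u c" if "p (Suc k) \<le> c" for c using that by (simp add: u'_def)
    show "(\<Sum>c\<in>{p k..<n}. S k $$ (i,c) * u' c) = 0" if i: "i \<in> ?B" for i
      using S_u'[of i] L_diag_block_mult_R[OF k i, of u] i p_le_n[of "Suc k"] k by (auto simp: q_def)
    show "(\<Sum>c\<in>{p k..<n}. S k $$ (i,c) * u' c) = (\<Sum>c\<in>?T. S (Suc k) $$ (i,c) * u c)"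
      if i: "p (Suc k) \<le> i" "i < n" for i
    proof -
      have "(\<Sum>c\<in>?T. S (Suc k) $$ (i,c) * u c)
          = (\<Sum>c\<in>?T. S k $$ (i,c) * u c - (\<Sum>l\<in>?B. L $$ (i,l) * R $$ (l,c)) * u c)"
        using i k by (intro sum.cong) (auto simp: S_Suc left_diff_distrib)
      also have "\<dots> = (\<Sum>c\<in>?T. S k $$ (i,c) * u c) - (\<Sum>l\<in>?B. L $$ (i,l) * q l)"
        unfolding sum_subtractf q_def sum_mult_sum_swap ..
      finally show ?thesis using S_u' i p_mono[of k "Suc k"] k by simp
    qed
  qed
qed

text \<open>The sense in which \<open>S k\<close> is the Schur complement of the leading \<open>k\<close> blocks of \<open>A\<close>.\<close>

lemma Schur_complement_extension:
  assumes "k \<le> nt"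
  shows "\<exists>v. (\<forall>i<p k. (\<Sum>j<n. A $$ (i,j) * v j) = 0) \<and>
     (\<forall>i. p k \<le> i \<and> i < n \<longrightarrow> v i = u i \<and> (\<Sum>j<n. A $$ (i,j) * v j) = (\<Sum>c\<in>{p k..<n}. S k $$ (i,c) * u c))"
  using assms
proof (induction k arbitrary: u)
  case 0
  show ?case by (intro exI[of _ u]) (auto simp: p_0 S_0 atLeast0LessThan)
next
  case (Suc k)
  then have k: "k < nt" by simp
  obtain u' where u'_tail: "\<And>c. p (Suc k) \<le> c \<Longrightarrow> u' c = u c"
    and u'_block: "\<And>i. i \<in> {p k..<p (Suc k)} \<Longrightarrow> (\<Sum>c\<in>{p k..<n}. S k $$ (i,c) * u' c) = 0"
    and u'_below: "\<And>i. p (Suc k) \<le> i \<Longrightarrow> i < n \<Longrightarrow>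
      (\<Sum>c\<in>{p k..<n}. S k $$ (i,c) * u' c) = (\<Sum>c\<in>{p (Suc k)..<n}. S (Suc k) $$ (i,c) * u c)"
    using Schur_complement_step[OF k, where u = u] by blast
  obtain v where v_lead: "\<forall>i<p k. (\<Sum>j<n. A $$ (i,j) * v j) = 0"
    and v_trail: "\<forall>i. p k \<le> i \<and> i < n \<longrightarrow> v i = u' i \<and> (\<Sum>j<n. A $$ (i,j) * v j) = (\<Sum>c\<in>{p k..<n}. S k $$ (i,c) * u' c)"
    using Suc.IH[of u'] k by auto
  have pk: "p k \<le> p (Suc k)" "p (Suc k) \<le> n" using p_mono[of k "Suc k"] p_le_n[of "Suc k"] k by auto
  show ?case
  proof (intro exI[of _ v] conjI allI impI)
    show "(\<Sum>j<n. A $$ (i,j) * v j) = 0" if "i < p (Suc k)" for i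
      using v_lead v_trail u'_block[of i] that pk by (cases "i < p k") auto
    fix i assume i: "p (Suc k) \<le> i \<and> i < n"
    then show "v i = u i" using v_trail u'_tail pk by auto
    show "(\<Sum>j<n. A $$ (i,j) * v j) = (\<Sum>c\<in>{p (Suc k)..<n}. S (Suc k) $$ (i,c) * u c)"
      using v_trail u'_below i pk by auto
  qed
qed

definition Schur_col_dominant :: "nat \<Rightarrow> bool" where
  "Schur_col_dominant k \<longleftrightarrow> (\<forall>j. p k \<le> j \<and> j < n \<longrightarrow>
      (\<Sum>i\<in>{p k..<n}-{j}. cmod (S k $$ (i,j))) \<le> cmod (S k $$ (j,j)))"

lemma Schur_col_dominantD:
  assumes k: "k < nt" and "Schur_col_dominant k" and j: "p k \<le> j" "j < n"
  shows "(\<Sum>i\<in>{p k..<p (Suc k)}-{j}. cmod (S k $$ (i,j))) + (\<Sum>i\<in>{p (Suc k)..<n}-{j}. cmod (S k $$ (i,j)))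
      \<le> cmod (S k $$ (j,j))"
proof -
  have split: "{p k..<n}-{j} = ({p k..<p (Suc k)}-{j}) \<union> ({p (Suc k)..<n}-{j})"
    using p_mono[of k "Suc k"] p_le_n[of "Suc k"] k by auto
  have "(\<Sum>i\<in>{p k..<n}-{j}. cmod (S k $$ (i,j)))
      = (\<Sum>i\<in>{p k..<p (Suc k)}-{j}. cmod (S k $$ (i,j))) + (\<Sum>i\<in>{p (Suc k)..<n}-{j}. cmod (S k $$ (i,j)))"
    unfolding split by (rule sum.union_disjoint) auto
  then show ?thesis using assms unfolding Schur_col_dominant_def by auto
qed

lemma Schur_col_dominant_tail_le:
  assumes k: "k < nt" and dom: "Schur_col_dominant k"
    and g: "\<And>i. p k \<le> i \<Longrightarrow> i < n \<Longrightarrow> g i = (\<Sum>c\<in>{p k..<p (Suc k)}. S k $$ (i,c) * u c)"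
  shows "(\<Sum>i\<in>{p (Suc k)..<n}. cmod (g i)) \<le> (\<Sum>a\<in>{p k..<p (Suc k)}. cmod (g a))"
proof -
  let ?B = "{p k..<p (Suc k)}" and ?T = "{p (Suc k)..<n}"
  let ?F = "\<lambda>i c. cmod (S k $$ (i,c)) * cmod (u c)"
  \<comment> \<open>weight the dominance of each column \<open>c\<close> of block \<open>k\<close> by \<open>|u c|\<close>, then compare row by row
    inside the block with the reverse triangle inequality\<close>
  have col: "(\<Sum>i\<in>?T. cmod (S k $$ (i,c))) \<le> cmod (S k $$ (c,c)) - (\<Sum>i\<in>?B-{c}. cmod (S k $$ (i,c)))"
    if c: "c \<in> ?B" for c
    using Schur_col_dominantD[OF k dom, of c] c p_le_n[of "Suc k"] k by auto
  have "(\<Sum>i\<in>?T. cmod (g i)) \<le> (\<Sum>i\<in>?T. \<Sum>c\<in>?B. ?F i c)"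
  proof (rule sum_mono)
    fix i assume "i \<in> ?T"
    then have "cmod (g i) \<le> (\<Sum>c\<in>?B. cmod (S k $$ (i,c) * u c))"
      using g[of i] p_mono[of k "Suc k"] k by (simp add: norm_sum)
    then show "cmod (g i) \<le> (\<Sum>c\<in>?B. ?F i c)" by (simp add: norm_mult)
  qed
  also have "\<dots> = (\<Sum>c\<in>?B. (\<Sum>i\<in>?T. cmod (S k $$ (i,c))) * cmod (u c))"
    by (subst sum.swap) (simp add: sum_distrib_right)
  also have "\<dots> \<le> (\<Sum>c\<in>?B. (cmod (S k $$ (c,c)) - (\<Sum>i\<in>?B-{c}. cmod (S k $$ (i,c)))) * cmod (u c))"
    by (intro sum_mono mult_right_mono col) auto
  also have "\<dots> = (\<Sum>c\<in>?B. ?F c c) - (\<Sum>c\<in>?B. \<Sum>i\<in>?B-{c}. ?F i c)"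
    by (simp add: sum_subtractf left_diff_distrib sum_distrib_right)
  also have "\<dots> = (\<Sum>a\<in>?B. ?F a a - (\<Sum>c\<in>?B-{a}. ?F a c))"
    by (subst sum_offdiag_swap) (simp_all add: sum_subtractf)
  also have "\<dots> \<le> (\<Sum>a\<in>?B. cmod (g a))"
  proof (rule sum_mono)
    fix a assume a: "a \<in> ?B"
    have "(\<Sum>c\<in>?B. S k $$ (a,c) * u c) = S k $$ (a,a) * u a + (\<Sum>c\<in>?B-{a}. S k $$ (a,c) * u c)"
      using a by (simp add: sum.remove)
    then have "cmod (S k $$ (a,a) * u a) - cmod (\<Sum>c\<in>?B-{a}. S k $$ (a,c) * u c)
        \<le> cmod (\<Sum>c\<in>?B. S k $$ (a,c) * u c)"
      by (metis norm_diff_ineq)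
    moreover have "cmod (\<Sum>c\<in>?B-{a}. S k $$ (a,c) * u c) \<le> (\<Sum>c\<in>?B-{a}. ?F a c)"
      by (rule order.trans[OF norm_sum]) (simp add: norm_mult)
    ultimately show "?F a a - (\<Sum>c\<in>?B-{a}. ?F a c) \<le> cmod (g a)"
      using a p_le_n[of "Suc k"] k by (simp add: g norm_mult)
  qed
  finally show ?thesis .
qed

lemma Schur_col_dominant_Suc:
  assumes k: "k < nt" and dom: "Schur_col_dominant k"
  shows "Schur_col_dominant (Suc k)"
  unfolding Schur_col_dominant_def
proof (intro allI impI)
  let ?B = "{p k..<p (Suc k)}" and ?T = "{p (Suc k)..<n}"
  fix j assume j: "p (Suc k) \<le> j \<and> j < n"
  have pk: "p k \<le> p (Suc k)" using p_mono[of k "Suc k"] k by simp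
  define w where "w i = (\<Sum>l\<in>?B. L $$ (i,l) * R $$ (l,j))" for i
  have w_S: "w i = (\<Sum>c\<in>?B. S k $$ (i,c) * (\<Sum>l\<in>?B. Rinv k c l * R $$ (l,j)))" if "p k \<le> i" "i < n" for i
    unfolding w_def using S_block_col_mult_Rinv[OF k that] by simp
  have w_block: "w a = S k $$ (a,j)" if "a \<in> ?B" for a
    unfolding w_def using S_row_block[OF k that, of j] j pk by simp
  have w_below: "S (Suc k) $$ (i,j) = S k $$ (i,j) - w i" if "i \<in> ?T" for i
    unfolding w_def using S_Suc[OF k, of i j] that j by auto
  have "(\<Sum>i\<in>?T. cmod (w i)) \<le> (\<Sum>a\<in>?B. cmod (w a))"
    by (rule Schur_col_dominant_tail_le[OF k dom w_S])
  then have tail: "(\<Sum>i\<in>?T. cmod (w i)) \<le> (\<Sum>a\<in>?B. cmod (S k $$ (a,j)))" by (simp add: w_block)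
  have col_j: "(\<Sum>a\<in>?B. cmod (S k $$ (a,j))) + (\<Sum>i\<in>?T-{j}. cmod (S k $$ (i,j))) \<le> cmod (S k $$ (j,j))"
    using Schur_col_dominantD[OF k dom, of j] j pk by auto
  have "(\<Sum>i\<in>?T. cmod (w i)) = cmod (w j) + (\<Sum>i\<in>?T-{j}. cmod (w i))"
    using j by (simp add: sum.remove)
  moreover have "(\<Sum>i\<in>?T-{j}. cmod (S (Suc k) $$ (i,j))) \<le> (\<Sum>i\<in>?T-{j}. cmod (S k $$ (i,j)) + cmod (w i))"
    by (intro sum_mono) (simp add: w_below norm_triangle_ineq4)
  moreover have "cmod (S k $$ (j,j)) - cmod (w j) \<le> cmod (S (Suc k) $$ (j,j))"
    using w_below[of j] j norm_triangle_ineq2[of "S k $$ (j,j)" "w j"] by simp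
  ultimately show "(\<Sum>i\<in>{p (Suc k)..<n}-{j}. cmod (S (Suc k) $$ (i,j))) \<le> cmod (S (Suc k) $$ (j,j))"
    using tail col_j by (simp add: sum.distrib)
qed

lemma diag_dom_cols_imp_Schur_col_dominant:
  assumes "diag_dom_cols A" and "k \<le> nt"
  shows "Schur_col_dominant k"
  using \<open>k \<le> nt\<close>
proof (induction k)
  case 0
  have "(\<Sum>i\<in>{0..<n}-{j}. cmod (S 0 $$ (i,j))) = (\<Sum>i\<in>{0..<n}-{j}. cmod (A $$ (i,j)))" if "j < n" for j
    using that by (intro sum.cong) (auto simp: S_0)
  then show ?case
    using assms(1) A_carrier unfolding Schur_col_dominant_def diag_dom_cols_def p_0 by (auto simp: S_0)
qed (simp add: Schur_col_dominant_Suc)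

lemma L_diag_block_isometry:
  assumes k: "k < nt"
  shows "L2_set (\<lambda>i. cmod (\<Sum>b\<in>{p k..<p (Suc k)}. L $$ (i,b) * w b)) {p k..<p (Suc k)}
       = L2_set (\<lambda>b. cmod (w b)) {p k..<p (Suc k)}"
proof -
  let ?B = "{p k..<p (Suc k)}"
  let ?g = "\<lambda>i. (\<Sum>b\<in>?B. L $$ (i,b) * w b)"
  have "(\<Sum>i\<in>?B. cnj (?g i) * ?g i)
      = (\<Sum>i\<in>?B. \<Sum>a\<in>?B. \<Sum>b\<in>?B. cnj (w a) * w b * (cnj (L $$ (i,a)) * L $$ (i,b)))"
    by (simp add: sum_distrib_left sum_distrib_right algebra_simps)
  also have "\<dots> = (\<Sum>a\<in>?B. \<Sum>i\<in>?B. \<Sum>b\<in>?B. cnj (w a) * w b * (cnj (L $$ (i,a)) * L $$ (i,b)))"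
    by (rule sum.swap)
  also have "\<dots> = (\<Sum>a\<in>?B. \<Sum>b\<in>?B. \<Sum>i\<in>?B. cnj (w a) * w b * (cnj (L $$ (i,a)) * L $$ (i,b)))"
    by (rule sum.cong[OF refl], rule sum.swap)
  also have "\<dots> = (\<Sum>a\<in>?B. \<Sum>b\<in>?B. cnj (w a) * w b * (\<Sum>i\<in>?B. cnj (L $$ (i,a)) * L $$ (i,b)))"
    by (simp add: sum_distrib_left)
  also have "\<dots> = (\<Sum>a\<in>?B. \<Sum>b\<in>?B. if a = b then cnj (w a) * w b else 0)"
    using k by (intro sum.cong refl) (simp add: L_diag_block_unitary)
  also have "\<dots> = (\<Sum>a\<in>?B. cnj (w a) * w a)" by simp
  finally have "(L2_set (\<lambda>i. cmod (?g i)) ?B)\<^sup>2 = (L2_set (\<lambda>b. cmod (w b)) ?B)\<^sup>2"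
    by (simp add: L2_set_cmod_square)
  then show ?thesis by simp
qed

lemma L_block_col_bound_dominant:
  assumes k: "k < nt" and dom: "Schur_col_dominant k"
  shows "L2_set (\<lambda>i. cmod (\<Sum>b\<in>{p k..<p (Suc k)}. L $$ (i,b) * w b)) {..<n}
      \<le> (1 + sqrt (card {p k..<p (Suc k)})) * L2_set (\<lambda>b. cmod (w b)) {p k..<p (Suc k)}"
proof -
  let ?B = "{p k..<p (Suc k)}" and ?T = "{p (Suc k)..<n}"
  define g where "g i = (\<Sum>b\<in>?B. L $$ (i,b) * w b)" for i
  define z where "z c = (\<Sum>b\<in>?B. Rinv k c b * w b)" for c
  have g_S: "g i = (\<Sum>c\<in>?B. S k $$ (i,c) * z c)" if "p k \<le> i" "i < n" for i
    unfolding z_def g_def using S_block_col_mult_Rinv[OF k that] by simp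
  have g_block: "L2_set (\<lambda>i. cmod (g i)) ?B = L2_set (\<lambda>b. cmod (w b)) ?B"
    unfolding g_def by (rule L_diag_block_isometry[OF k])
  have "L2_set (\<lambda>i. cmod (g i)) {..<n} = sqrt ((\<Sum>i\<in>?B. (cmod (g i))\<^sup>2) + (\<Sum>i\<in>?T. (cmod (g i))\<^sup>2))"
    unfolding L2_set_def using sum_lessThan_split_block[OF k, of "\<lambda>i. (cmod (g i))\<^sup>2"] k
    by (simp add: g_def L_upper_zero)
  also have "\<dots> \<le> L2_set (\<lambda>i. cmod (g i)) ?B + L2_set (\<lambda>i. cmod (g i)) ?T"
    unfolding L2_set_def by (rule sqrt_add_le_add_sqrt) (auto intro: sum_nonneg)
  also have "L2_set (\<lambda>i. cmod (g i)) ?T \<le> (\<Sum>i\<in>?T. cmod (g i))"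
    by (rule L2_set_le_sum) simp
  also have "\<dots> \<le> (\<Sum>a\<in>?B. cmod (g a))"
    by (rule Schur_col_dominant_tail_le[OF k dom g_S])
  also have "\<dots> \<le> sqrt (card ?B) * L2_set (\<lambda>i. cmod (g i)) ?B"
    using L2_set_mult_ineq[of "\<lambda>_. 1" "\<lambda>i. cmod (g i)" ?B] by (simp add: L2_set_constant)
  finally show ?thesis using g_block by (simp add: algebra_simps g_def)
qed

lemma L_block_col_eq_A_mult:
  assumes k: "k < nt"
  obtains v where "\<And>i. i < n \<Longrightarrow> (\<Sum>j<n. A $$ (i,j) * v j) = (\<Sum>b\<in>{p k..<p (Suc k)}. L $$ (i,b) * w b)"
    and "\<And>i. p (Suc k) \<le> i \<Longrightarrow> i < n \<Longrightarrow> v i = 0"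
proof -
  let ?B = "{p k..<p (Suc k)}" and ?T = "{p (Suc k)..<n}"
  define u where "u c = (if c \<in> ?B then \<Sum>b\<in>?B. Rinv k c b * w b else 0)" for c
  obtain v where v_lead: "\<forall>i<p k. (\<Sum>j<n. A $$ (i,j) * v j) = 0"
    and v_trail: "\<forall>i. p k \<le> i \<and> i < n \<longrightarrow> v i = u i \<and> (\<Sum>j<n. A $$ (i,j) * v j) = (\<Sum>c\<in>{p k..<n}. S k $$ (i,c) * u c)"
    using Schur_complement_extension[of k u] k by auto
  show ?thesis
  proof
    fix i assume i: "i < n"
    show "(\<Sum>j<n. A $$ (i,j) * v j) = (\<Sum>b\<in>?B. L $$ (i,b) * w b)"
    proof (cases "i < p k")
      case True
      then show ?thesis using v_lead k by (simp add: L_upper_zero)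
    next
      case False
      have "(\<Sum>c\<in>?B. S k $$ (i,c) * u c) = (\<Sum>c\<in>?B. S k $$ (i,c) * (\<Sum>b\<in>?B. Rinv k c b * w b))"
        by (intro sum.cong) (auto simp: u_def)
      moreover have "(\<Sum>c\<in>?T. S k $$ (i,c) * u c) = 0"
        by (intro sum.neutral) (auto simp: u_def)
      ultimately show ?thesis
        using v_trail i False sum_split_block[OF k, of "\<lambda>c. S k $$ (i,c) * u c"] S_block_col_mult_Rinv[OF k _ i]
        by simp
    qed
  next
    show "v i = 0" if "p (Suc k) \<le> i" "i < n" for i
      using v_trail that p_mono[of k "Suc k"] k by (simp add: u_def)
  qed
qed

lemma L_block_col_bound_spd:
  assumes k: "k < nt"
    and herm: "\<And>i j. i < n \<Longrightarrow> j < n \<Longrightarrow> A $$ (i,j) = cnj (A $$ (j,i))"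
    and psd: "\<And>f. 0 \<le> Re (sesq_form n A f f)"
    and "0 \<le> \<alpha>"
    and norm_A: "\<And>f. L2_set (\<lambda>i. cmod (\<Sum>j<n. A $$ (i,j) * f j)) {..<n} \<le> \<alpha> * L2_set (\<lambda>i. cmod (f i)) {..<n}"
    and "0 \<le> \<beta>"
    and inverse: "\<And>i l. i < n \<Longrightarrow> l < n \<Longrightarrow> (\<Sum>j<n. A $$ (i,j) * Ainv $$ (j,l)) = (if i = l then 1 else 0)"
    and norm_Ainv: "\<And>f. L2_set (\<lambda>i. cmod (\<Sum>j<n. Ainv $$ (i,j) * f j)) {..<n} \<le> \<beta> * L2_set (\<lambda>i. cmod (f i)) {..<n}"
  shows "L2_set (\<lambda>i. cmod (\<Sum>b\<in>{p k..<p (Suc k)}. L $$ (i,b) * w b)) {..<n}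
      \<le> sqrt (\<alpha> * \<beta>) * L2_set (\<lambda>b. cmod (w b)) {p k..<p (Suc k)}"
proof -
  let ?B = "{p k..<p (Suc k)}" and ?T = "{p (Suc k)..<n}"
  define g where "g i = (\<Sum>b\<in>?B. L $$ (i,b) * w b)" for i
  obtain v where Av: "\<And>i. i < n \<Longrightarrow> (\<Sum>j<n. A $$ (i,j) * v j) = g i"
    and v_tail: "\<And>i. p (Suc k) \<le> i \<Longrightarrow> i < n \<Longrightarrow> v i = 0"
    using L_block_col_eq_A_mult[OF k, where w = w] unfolding g_def by blast
  let ?Y = "L2_set (\<lambda>b. cmod (g b)) ?B" and ?V = "L2_set (\<lambda>i. cmod (v i)) {..<n}"
  have Y: "?Y = L2_set (\<lambda>b. cmod (w b)) ?B"
    unfolding g_def by (rule L_diag_block_isometry[OF k])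
  \<comment> \<open>\<open>v\<^sup>* A v\<close> only sees block \<open>k\<close>: \<open>A v = g\<close> vanishes above it and \<open>v\<close> vanishes below it\<close>
  have "sesq_form n A v v = (\<Sum>i<n. cnj (v i) * g i)" unfolding sesq_form_def by (simp add: Av)
  also have "\<dots> = (\<Sum>i\<in>?B. cnj (v i) * g i)"
    using sum_lessThan_split_block[OF k, of "\<lambda>i. cnj (v i) * g i"] k v_tail by (simp add: g_def L_upper_zero)
  finally have "Re (sesq_form n A v v) \<le> L2_set (\<lambda>i. cmod (v i)) ?B * ?Y"
    using Re_inner_le_L2_set[of v g ?B] by simp
  also have "\<dots> \<le> ?V * ?Y"
    using p_le_n[of "Suc k"] k by (intro mult_right_mono L2_set_mono_subset) auto
  finally have form_le: "Re (sesq_form n A v v) \<le> ?V * ?Y" .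
  have V: "?V \<le> \<beta> * ?Y" by (rule L2_set_le_of_sesq_form_le[OF herm psd \<open>0 \<le> \<beta>\<close> L2_set_nonneg inverse norm_Ainv form_le])
  have "(L2_set (\<lambda>i. cmod (g i)) {..<n})\<^sup>2 = (L2_set (\<lambda>i. cmod (\<Sum>j<n. A $$ (i,j) * v j)) {..<n})\<^sup>2"
    by (simp add: Av cong: L2_set_cong_simp)
  also have "\<dots> \<le> \<alpha> * Re (sesq_form n A v v)"
    by (rule L2_set_mult_square_le_sesq_form[OF herm psd \<open>0 \<le> \<alpha>\<close> norm_A])
  also have "\<dots> \<le> \<alpha> * (\<beta> * ?Y * ?Y)"
    using form_le mult_right_mono[OF V, of ?Y] by (intro mult_left_mono \<open>0 \<le> \<alpha>\<close>) auto
  also have "\<dots> = (sqrt (\<alpha> * \<beta>) * ?Y)\<^sup>2"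
    using \<open>0 \<le> \<alpha>\<close> \<open>0 \<le> \<beta>\<close> by (simp add: power2_eq_square power_mult_distrib)
  finally have "L2_set (\<lambda>i. cmod (g i)) {..<n} \<le> sqrt (\<alpha> * \<beta>) * ?Y"
    by (rule power2_le_imp_le) (simp add: \<open>0 \<le> \<alpha>\<close> \<open>0 \<le> \<beta>\<close>)
  then show ?thesis using Y by (simp add: g_def)
qed

lemma spec_norm_L_le_block_cols:
  assumes "0 \<le> C"
    and block_col: "\<And>k w. k < nt \<Longrightarrow> L2_set (\<lambda>i. cmod (\<Sum>b\<in>{p k..<p (Suc k)}. L $$ (i,b) * w b)) {..<n}
                \<le> C * L2_set (\<lambda>b. cmod (w b)) {p k..<p (Suc k)}"
  shows "spec_norm L \<le> C * nt"
proof (rule spec_norm_leI[OF L_carrier])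
  show "0 \<le> C * nt" using \<open>0 \<le> C\<close> by simp
  fix x
  have "L2_set (\<lambda>i. cmod (\<Sum>j<n. L $$ (i,j) * x j)) {..<n}
      = L2_set (\<lambda>i. cmod (\<Sum>k<nt. \<Sum>b\<in>{p k..<p (Suc k)}. L $$ (i,b) * x b)) {..<n}"
    by (simp only: sum_lessThan_blocks)
  also have "\<dots> \<le> (\<Sum>k<nt. L2_set (\<lambda>i. cmod (\<Sum>b\<in>{p k..<p (Suc k)}. L $$ (i,b) * x b)) {..<n})"
    by (rule L2_set_sum_le) simp
  also have "\<dots> \<le> (\<Sum>k<nt. C * L2_set (\<lambda>j. cmod (x j)) {..<n})"
  proof (rule sum_mono)
    fix k assume "k \<in> {..<nt}"
    then have "L2_set (\<lambda>b. cmod (x b)) {p k..<p (Suc k)} \<le> L2_set (\<lambda>j. cmod (x j)) {..<n}"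
      using p_le_n[of "Suc k"] by (intro L2_set_mono_subset) auto
    then show "L2_set (\<lambda>i. cmod (\<Sum>b\<in>{p k..<p (Suc k)}. L $$ (i,b) * x b)) {..<n} \<le> C * L2_set (\<lambda>j. cmod (x j)) {..<n}"
      using block_col[of k x] \<open>k \<in> {..<nt}\<close> \<open>0 \<le> C\<close> by (meson lessThan_iff mult_left_mono order_trans)
  qed
  finally show "L2_set (\<lambda>i. cmod (\<Sum>j<n. L $$ (i,j) * x j)) {..<n} \<le> C * nt * L2_set (\<lambda>i. cmod (x i)) {..<n}"
    by (simp add: algebra_simps)
qed

theorem spec_norm_L_le_diag_dom:
  assumes "diag_dom_cols A" and block_size: "\<And>k. k < nt \<Longrightarrow> p (Suc k) - p k \<le> m"
  shows "spec_norm L \<le> (1 + sqrt m) * nt"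
proof (rule spec_norm_L_le_block_cols)
  fix k w assume k: "k < nt"
  have "(1 + sqrt (card {p k..<p (Suc k)})) * L2_set (\<lambda>b. cmod (w b)) {p k..<p (Suc k)}
      \<le> (1 + sqrt m) * L2_set (\<lambda>b. cmod (w b)) {p k..<p (Suc k)}"
    using block_size[OF k] by (intro mult_right_mono) auto
  with L_block_col_bound_dominant[OF k diag_dom_cols_imp_Schur_col_dominant[OF assms(1) less_imp_le[OF k]], of w]
  show "L2_set (\<lambda>i. cmod (\<Sum>b\<in>{p k..<p (Suc k)}. L $$ (i,b) * w b)) {..<n}
      \<le> (1 + sqrt m) * L2_set (\<lambda>b. cmod (w b)) {p k..<p (Suc k)}"
    by linarith
qed simp

theorem spec_norm_L_le_spd:
  assumes "spd A"
  shows "spec_norm L \<le> sqrt (cond2 A) * nt"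
proof -
  note Ainv = spd_mat_inv[OF assms A_carrier]
  have inverse: "(\<Sum>j<n. A $$ (i,j) * mat_inv A $$ (j,l)) = (if i = l then 1 else 0)" if "i < n" "l < n" for i l
    using Ainv that index_mult_mat_sum[OF A_carrier Ainv(1)] by simp
  have "spec_norm L \<le> sqrt (spec_norm A * spec_norm (mat_inv A)) * nt"
  proof (rule spec_norm_L_le_block_cols)
    show "L2_set (\<lambda>i. cmod (\<Sum>b\<in>{p k..<p (Suc k)}. L $$ (i,b) * w b)) {..<n}
        \<le> sqrt (spec_norm A * spec_norm (mat_inv A)) * L2_set (\<lambda>b. cmod (w b)) {p k..<p (Suc k)}"
      if "k < nt" for k w
      using assms A_carrier Ainv(1)
      by (intro L_block_col_bound_spd[OF that _ _ _ _ _ inverse])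
         (auto intro: spd_hermitian spd_sesq_form_nonneg spec_norm_nonneg L2_set_mult_le_spec_norm)
  qed (use spec_norm_nonneg[OF A_carrier] spec_norm_nonneg[OF Ainv(1)] in simp)
  then show ?thesis unfolding cond2_def .
qed

end

section \<open>The block LU algorithm in entrywise form\<close>

lemma is_blockingD:
  assumes "is_blocking I n"
  shows "I ! 0 = 0" and "I ! num_blocks I = n" and "\<And>i j. i < j \<Longrightarrow> j \<le> num_blocks I \<Longrightarrow> I ! i < I ! j"
proof -
  have I: "length I \<ge> 1" "sorted_wrt (<) I" "I ! 0 = 0" "last I = n"
    using assms unfolding is_blocking_def by auto
  show "I ! 0 = 0" by (rule I(3))
  have "I \<noteq> []" using I(1) by auto
  then show "I ! num_blocks I = n" using I(4) last_conv_nth[of I] unfolding num_blocks_def by simp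
  show "I ! i < I ! j" if "i < j" "j \<le> num_blocks I" for i j
    using sorted_wrt_nth_less[OF I(2)] I(1) that unfolding num_blocks_def by simp
qed

lemma blocking_mono:
  assumes "is_blocking I n" "i \<le> j" "j \<le> num_blocks I"
  shows "I ! i \<le> I ! j"
  using is_blockingD(3)[OF assms(1), of i j] assms(2,3) by (cases "i = j") auto

lemma blocking_nth_le:
  assumes "is_blocking I n" "k \<le> num_blocks I"
  shows "I ! k \<le> n"
  using blocking_mono[OF assms] is_blockingD(2)[OF assms(1)] by simp

lemma blk_cover:
  assumes I: "is_blocking I n" and "i < n"
  obtains k where "k < num_blocks I" "i \<in> blk I k"
proof -
  have "\<exists>k<m. i \<in> blk I k" if "i < I ! m" for m
    using that
  proof (induction m)
    case 0
    then show ?case using is_blockingD(1)[OF I] by simp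
  next
    case (Suc m)
    show ?case
    proof (cases "i < I ! m")
      case True
      then show ?thesis using Suc.IH less_SucI by blast
    next
      case False
      then show ?thesis using Suc.prems by (intro exI[of _ m]) (auto simp: blk_def)
    qed
  qed
  from this[of "num_blocks I"] show ?thesis
    using that is_blockingD(2)[OF I] \<open>i < n\<close> by auto
qed

lemma blk_index_ge:
  assumes I: "is_blocking I n" and "x \<in> blk I i" "I ! k \<le> x" "k \<le> num_blocks I"
  shows "k \<le> i"
proof (rule ccontr)
  assume "\<not> k \<le> i"
  then have "I ! Suc i \<le> I ! k" using blocking_mono[OF I, of "Suc i" k] assms(4) by simp
  then show False using assms(2,3) by (simp add: blk_def)
qed

lemma blk_index_less:
  assumes I: "is_blocking I n" and "x \<in> blk I i" "x < I ! k" "i < num_blocks I"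
  shows "i < k"
proof (rule ccontr)
  assume "\<not> i < k"
  then have "I ! k \<le> I ! i" using blocking_mono[OF I, of k i] assms(4) by simp
  then show False using assms(2,3) by (simp add: blk_def)
qed

lemma block_size_le_max_block_size:
  assumes "k < num_blocks I"
  shows "I ! Suc k - I ! k \<le> max_block_size I"
proof -
  have "{I ! Suc k - I ! k | k. k < num_blocks I} = (\<lambda>k. I ! Suc k - I ! k) ` {..<num_blocks I}" by auto
  then show ?thesis unfolding max_block_size_def using assms by (intro Max_ge) auto
qed

lemma block_carrier:
  assumes M: "M \<in> carrier_mat n n" and I: "is_blocking I n" and "i < num_blocks I" "j < num_blocks I"
  shows "block M I i j \<in> carrier_mat (card (blk I i)) (card (blk I j))"
proof -
  have "I ! Suc i \<le> n" "I ! Suc j \<le> n" using blocking_nth_le[OF I] assms(3,4) by auto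
  then have "{x. x < dim_row M \<and> x \<in> blk I i} = blk I i" "{x. x < dim_col M \<and> x \<in> blk I j} = blk I j"
    using M by (auto simp: blk_def)
  then show ?thesis unfolding block_def carrier_mat_def by (simp add: dim_submatrix)
qed

lemma block_index:
  assumes M: "M \<in> carrier_mat n n" and I: "is_blocking I n" and ij: "i < num_blocks I" "j < num_blocks I"
    and a: "a \<in> blk I i" and b: "b \<in> blk I j"
  shows "block M I i j $$ (a - I ! i, b - I ! j) = M $$ (a,b)"
proof -
  have "a < n" "b < n" using a b blocking_nth_le[OF I, of "Suc i"] blocking_nth_le[OF I, of "Suc j"] ij
    by (auto simp: blk_def)
  moreover have "card {x \<in> blk I i. x < a} = a - I ! i" "card {x \<in> blk I j. x < b} = b - I ! j"
  proof -
    have "{x \<in> blk I i. x < a} = {I ! i..<a}" "{x \<in> blk I j. x < b} = {I ! j..<b}"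
      using a b by (auto simp: blk_def)
    then show "card {x \<in> blk I i. x < a} = a - I ! i" "card {x \<in> blk I j. x < b} = b - I ! j" by simp_all
  qed
  ultimately show ?thesis
    using submatrix_index_card[of a M b "blk I i" "blk I j"] M a b unfolding block_def by simp
qed

lemma mult_index_shift:
  assumes "X \<in> carrier_mat r m" "Y \<in> carrier_mat m s" "i < r" "j < s"
  shows "(X * Y) $$ (i,j) = (\<Sum>l\<in>{q..<q+m}. X $$ (i, l - q) * Y $$ (l - q, j))"
  using index_mult_mat_sum[OF assms] sum.shift_bounds_nat_ivl[of "\<lambda>l. X $$ (i, l - q) * Y $$ (l - q, j)" 0 q m]
  by (simp add: atLeast0LessThan add.commute)

lemma blk_eq_shift:
  assumes "is_blocking I n" "k < num_blocks I"
  shows "{I ! k..<I ! k + card (blk I k)} = blk I k"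
  using is_blockingD(3)[OF assms(1), of k "Suc k"] assms(2) by (auto simp: blk_def)

lemma block_mult_index:
  assumes M: "M \<in> carrier_mat n n" and I: "is_blocking I n" and ik: "i < num_blocks I" "k < num_blocks I"
    and X: "X \<in> carrier_mat (card (blk I k)) s" and a: "a \<in> blk I i" and "e < s"
  shows "(block M I i k * X) $$ (a - I ! i, e) = (\<Sum>l\<in>blk I k. M $$ (a,l) * X $$ (l - I ! k, e))"
proof -
  have "a - I ! i < card (blk I i)" using a by (auto simp: blk_def)
  then have "(block M I i k * X) $$ (a - I ! i, e)
      = (\<Sum>l\<in>blk I k. block M I i k $$ (a - I ! i, l - I ! k) * X $$ (l - I ! k, e))"
    using mult_index_shift[OF block_carrier[OF M I ik] X _ \<open>e < s\<close>, of _ "I ! k"] blk_eq_shift[OF I ik(2)]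
    by simp
  also have "\<dots> = (\<Sum>l\<in>blk I k. M $$ (a,l) * X $$ (l - I ! k, e))"
    by (intro sum.cong refl) (simp add: block_index[OF M I ik a])
  finally show ?thesis .
qed

lemma unitary_block_orthonormal_cols:
  assumes M: "M \<in> carrier_mat n n" and I: "is_blocking I n" and k: "k < num_blocks I"
    and U: "unitary_mat (block M I k k)" and a: "a \<in> blk I k" and b: "b \<in> blk I k"
  shows "(\<Sum>i\<in>blk I k. cnj (M $$ (i,a)) * M $$ (i,b)) = (if a = b then 1 else 0)"
proof -
  let ?U = "block M I k k" and ?m = "card (blk I k)"
  have Uc: "?U \<in> carrier_mat ?m ?m" by (rule block_carrier[OF M I k k])
  have adj_carrier: "mat_adjoint ?U \<in> carrier_mat ?m ?m"
    using Uc by (auto simp: mat_adjoint_def)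
  have adj: "mat_adjoint ?U $$ (x,y) = cnj (?U $$ (y,x))" if "x < ?m" "y < ?m" for x y
    using Uc that by (auto simp: mat_adjoint_def mat_of_rows_index)
  have ab: "a - I ! k < ?m" "b - I ! k < ?m" using a b by (auto simp: blk_def)
  have "(\<Sum>i\<in>blk I k. cnj (M $$ (i,a)) * M $$ (i,b))
      = (\<Sum>i\<in>blk I k. mat_adjoint ?U $$ (a - I ! k, i - I ! k) * ?U $$ (i - I ! k, b - I ! k))"
    using a b ab by (intro sum.cong refl) (auto simp: adj block_index[OF M I k k] blk_def)
  also have "\<dots> = (mat_adjoint ?U * ?U) $$ (a - I ! k, b - I ! k)"
    using mult_index_shift[OF adj_carrier Uc ab, of "I ! k"] blk_eq_shift[OF I k] by simp
  also have "\<dots> = (if a = b then 1 else 0)"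
    using U Uc ab a b unfolding unitary_mat_def by (auto simp: blk_def)
  finally show ?thesis .
qed

lemma block_row_index:
  assumes L: "L \<in> carrier_mat n n" and R: "R \<in> carrier_mat n n" and P: "P \<in> carrier_mat n n"
    and I: "is_blocking I n" and k: "k < num_blocks I"
    and row: "\<And>j. k \<le> j \<Longrightarrow> j < num_blocks I \<Longrightarrow> block P I k j = block L I k k * block R I k j"
    and a: "a \<in> blk I k" and j: "I ! k \<le> j" "j < n"
  shows "P $$ (a,j) = (\<Sum>l\<in>blk I k. L $$ (a,l) * R $$ (l,j))"
proof -
  obtain j0 where j0: "j0 < num_blocks I" "j \<in> blk I j0" using blk_cover[OF I j(2)] by blast
  have kj: "k \<le> j0" using blk_index_ge[OF I j0(2) j(1)] k by simp
  have "P $$ (a,j) = (block L I k k * block R I k j0) $$ (a - I ! k, j - I ! j0)"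
    using block_index[OF P I k j0(1) a j0(2)] row[OF kj j0(1)] by simp
  also have "\<dots> = (\<Sum>l\<in>blk I k. L $$ (a,l) * block R I k j0 $$ (l - I ! k, j - I ! j0))"
    using j0(2) by (intro block_mult_index[OF L I k k block_carrier[OF R I k j0(1)] a]) (auto simp: blk_def)
  also have "\<dots> = (\<Sum>l\<in>blk I k. L $$ (a,l) * R $$ (l,j))"
    by (intro sum.cong refl) (simp add: block_index[OF R I k j0(1) _ j0(2)])
  finally show ?thesis .
qed

lemma block_col_index:
  assumes L: "L \<in> carrier_mat n n" and P: "P \<in> carrier_mat n n"
    and I: "is_blocking I n" and k: "k < num_blocks I"
    and X: "X \<in> carrier_mat (card (blk I k)) (card (blk I k))"
    and col: "\<And>i. k \<le> i \<Longrightarrow> i < num_blocks I \<Longrightarrow> block L I i k = block P I i k * X"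
    and i: "I ! k \<le> i" "i < n" and l: "l \<in> blk I k"
  shows "L $$ (i,l) = (\<Sum>c\<in>blk I k. P $$ (i,c) * X $$ (c - I ! k, l - I ! k))"
proof -
  obtain i0 where i0: "i0 < num_blocks I" "i \<in> blk I i0" using blk_cover[OF I i(2)] by blast
  have ki: "k \<le> i0" using blk_index_ge[OF I i0(2) i(1)] k by simp
  have "L $$ (i,l) = (block P I i0 k * X) $$ (i - I ! i0, l - I ! k)"
    using block_index[OF L I i0(1) k i0(2) l] col[OF ki i0(1)] by simp
  also have "\<dots> = (\<Sum>c\<in>blk I k. P $$ (i,c) * X $$ (c - I ! k, l - I ! k))"
    using l by (intro block_mult_index[OF P I i0(1) k X i0(2)]) (auto simp: blk_def)
  finally show ?thesis .
qed

lemma block_upper_zero_index: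
  assumes L: "L \<in> carrier_mat n n" and I: "is_blocking I n" and k: "k < num_blocks I"
    and upper: "\<And>i. i < k \<Longrightarrow> block L I i k = 0\<^sub>m (card (blk I i)) (card (blk I k))"
    and i: "i < I ! k" and l: "l \<in> blk I k"
  shows "L $$ (i,l) = 0"
proof -
  have "i < n" using i blocking_nth_le[OF I, of k] k by simp
  then obtain i0 where i0: "i0 < num_blocks I" "i \<in> blk I i0" using blk_cover[OF I] by blast
  have "i0 < k" by (rule blk_index_less[OF I i0(2) i i0(1)])
  then have "L $$ (i,l) = 0\<^sub>m (card (blk I i0)) (card (blk I k)) $$ (i - I ! i0, l - I ! k)"
    using block_index[OF L I i0(1) k i0(2) l] upper by simp
  moreover have "i - I ! i0 < card (blk I i0)" "l - I ! k < card (blk I k)"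
    using i0(2) l by (auto simp: blk_def)
  ultimately show ?thesis by simp
qed

lemma inverts_mat_carrier:
  assumes "Y \<in> carrier_mat d d" "inverts_mat Y X" "inverts_mat X Y"
  shows "X \<in> carrier_mat d d"
proof -
  have "dim_col (Y * X) = dim_col (1\<^sub>m (dim_row Y) :: 'a mat)" "dim_col (X * Y) = dim_col (1\<^sub>m (dim_row X) :: 'a mat)"
    using assms(2,3) unfolding inverts_mat_def by simp_all
  then show ?thesis using assms(1) by auto
qed

lemma inverts_mat_mult_cancel_left:
  assumes "U \<in> carrier_mat m m" "X \<in> carrier_mat m m" "Y \<in> carrier_mat m c" "inverts_mat U X"
  shows "U * (X * Y) = Y"
  using assms by (simp add: assoc_mult_mat[symmetric] inverts_mat_def)

lemma inverts_mat_mult_cancel_right: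
  assumes "Y \<in> carrier_mat r m" "U \<in> carrier_mat m m" "X \<in> carrier_mat m m" "inverts_mat U X"
  shows "Y * U * X = Y"
  using assms by (simp add: assoc_mult_mat inverts_mat_def)

lemma block_LU_unitary_block_relations:
  assumes A: "A \<in> carrier_mat n n" and I: "is_blocking I n" and LU: "block_LU_unitary A I L R"
  obtains S RI where "S 0 = A"
    and "\<And>k. k \<le> num_blocks I \<Longrightarrow> S k \<in> carrier_mat n n"
    and "\<And>k. k < num_blocks I \<Longrightarrow> S (Suc k) = mat n n (\<lambda>(i, j).
              if I ! Suc k \<le> i \<and> I ! Suc k \<le> j
              then S k $$ (i, j) - (\<Sum>l\<in>blk I k. L $$ (i, l) * R $$ (l, j)) else 0)"
    and "\<And>k. k < num_blocks I \<Longrightarrow> unitary_mat (block L I k k)"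
    and "\<And>k. k < num_blocks I \<Longrightarrow> RI k \<in> carrier_mat (card (blk I k)) (card (blk I k))"
    and "\<And>k j. k \<le> j \<Longrightarrow> j < num_blocks I \<Longrightarrow> block (S k) I k j = block L I k k * block R I k j"
    and "\<And>k i. k \<le> i \<Longrightarrow> i < num_blocks I \<Longrightarrow> block L I i k = block (S k) I i k * RI k"
proof -
  let ?nt = "num_blocks I"
  have L: "L \<in> carrier_mat n n" and R: "R \<in> carrier_mat n n"
    using LU A unfolding block_LU_unitary_def Let_def by auto
  obtain S where S_0: "S 0 = A"
    and unitary: "\<And>k. k < ?nt \<Longrightarrow> unitary_mat (block L I k k)"
    and diag: "\<And>k. k < ?nt \<Longrightarrow> block (S k) I k k = block L I k k * block R I k k"
    and Rinv: "\<And>k. k < ?nt \<Longrightarrow> \<exists>X. inverts_mat (block R I k k) X \<and> inverts_mat X (block R I k k) \<and>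
              (\<forall>i. k < i \<and> i < ?nt \<longrightarrow> block L I i k = block (S k) I i k * X)"
    and Linv: "\<And>k. k < ?nt \<Longrightarrow> \<exists>X. inverts_mat (block L I k k) X \<and> inverts_mat X (block L I k k) \<and>
              (\<forall>j. k < j \<and> j < ?nt \<longrightarrow> block R I k j = X * block (S k) I k j)"
    and S_Suc: "\<And>k. k < ?nt \<Longrightarrow> S (Suc k) = mat n n (\<lambda>(i, j).
              if I ! Suc k \<le> i \<and> I ! Suc k \<le> j
              then S k $$ (i, j) - (\<Sum>l\<in>blk I k. L $$ (i, l) * R $$ (l, j)) else 0)"
    using LU unfolding block_LU_unitary_def Let_def carrier_matD(1)[OF A] by blast
  obtain RI where RI: "\<And>k. k < ?nt \<Longrightarrow> inverts_mat (block R I k k) (RI k) \<and> inverts_mat (RI k) (block R I k k) \<and>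
              (\<forall>i. k < i \<and> i < ?nt \<longrightarrow> block L I i k = block (S k) I i k * RI k)"
    using Rinv by metis
  obtain LI where LI: "\<And>k. k < ?nt \<Longrightarrow> inverts_mat (block L I k k) (LI k) \<and> inverts_mat (LI k) (block L I k k) \<and>
              (\<forall>j. k < j \<and> j < ?nt \<longrightarrow> block R I k j = LI k * block (S k) I k j)"
    using Linv by metis
  have S: "S k \<in> carrier_mat n n" if "k \<le> ?nt" for k
    using that A S_0 S_Suc by (cases k) auto
  have RI_carrier: "RI k \<in> carrier_mat (card (blk I k)) (card (blk I k))" if "k < ?nt" for k
    using inverts_mat_carrier[OF block_carrier[OF R I that that]] RI[OF that] by blast
  have LI_carrier: "LI k \<in> carrier_mat (card (blk I k)) (card (blk I k))" if "k < ?nt" for k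
    using inverts_mat_carrier[OF block_carrier[OF L I that that]] LI[OF that] by blast
  show ?thesis
  proof (rule that[OF S_0 S S_Suc unitary RI_carrier])
    show "block (S k) I k j = block L I k k * block R I k j" if "k \<le> j" "j < ?nt" for k j
    proof (cases "k = j")
      case False
      then show ?thesis
        using LI that inverts_mat_mult_cancel_left[OF block_carrier[OF L I _ _] LI_carrier block_carrier[OF S I]]
        by simp
    qed (use diag that in simp)
    show "block L I i k = block (S k) I i k * RI k" if "k \<le> i" "i < ?nt" for k i
    proof (cases "k = i")
      case True
      then show ?thesis
        using diag RI that inverts_mat_mult_cancel_right[OF block_carrier[OF L I] block_carrier[OF R I] RI_carrier]
        by simp
    qed (use RI that in simp)
  qed
qed

lemma block_LU_unitary_imp_block_LU:
  assumes A: "A \<in> carrier_mat n n" and I: "is_blocking I n" and LU: "block_LU_unitary A I L R"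
  shows "\<exists>S Rinv. block_LU n (num_blocks I) ((!) I) A L R S Rinv"
proof -
  let ?nt = "num_blocks I"
  have L: "L \<in> carrier_mat n n" and R: "R \<in> carrier_mat n n"
    and L_upper: "\<And>i j. i < ?nt \<Longrightarrow> j < ?nt \<Longrightarrow> i < j \<Longrightarrow> block L I i j = 0\<^sub>m (card (blk I i)) (card (blk I j))"
    using LU A unfolding block_LU_unitary_def Let_def by auto
  obtain S RI where S_0: "S 0 = A" and S: "\<And>k. k \<le> ?nt \<Longrightarrow> S k \<in> carrier_mat n n"
    and S_Suc: "\<And>k. k < ?nt \<Longrightarrow> S (Suc k) = mat n n (\<lambda>(i, j).
              if I ! Suc k \<le> i \<and> I ! Suc k \<le> j
              then S k $$ (i, j) - (\<Sum>l\<in>blk I k. L $$ (i, l) * R $$ (l, j)) else 0)"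
    and unitary: "\<And>k. k < ?nt \<Longrightarrow> unitary_mat (block L I k k)"
    and RI: "\<And>k. k < ?nt \<Longrightarrow> RI k \<in> carrier_mat (card (blk I k)) (card (blk I k))"
    and row: "\<And>k j. k \<le> j \<Longrightarrow> j < ?nt \<Longrightarrow> block (S k) I k j = block L I k k * block R I k j"
    and col: "\<And>k i. k \<le> i \<Longrightarrow> i < ?nt \<Longrightarrow> block L I i k = block (S k) I i k * RI k"
    using block_LU_unitary_block_relations[OF A I LU] by blast
  define Rinv where "Rinv k c l = RI k $$ (c - I ! k, l - I ! k)" for k c l
  have blk: "blk I k = {I ! k..<I ! Suc k}" for k by (simp add: blk_def)
  have "block_LU n ?nt ((!) I) A L R S Rinv"
  proof (unfold_locales, unfold blk[symmetric])
    show "I ! 0 = 0" "I ! ?nt = n" "\<And>i j. i < j \<Longrightarrow> j \<le> ?nt \<Longrightarrow> I ! i < I ! j"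
      using is_blockingD[OF I] by auto
    show "A \<in> carrier_mat n n" "L \<in> carrier_mat n n" by (fact A L)+
    show "S 0 $$ (i,j) = A $$ (i,j)" for i j by (simp add: S_0)
    show "S (Suc k) $$ (i,j) = S k $$ (i,j) - (\<Sum>l\<in>blk I k. L $$ (i,l) * R $$ (l,j))"
      if "k < ?nt" "I ! Suc k \<le> i" "i < n" "I ! Suc k \<le> j" "j < n" for k i j
      using S_Suc[OF that(1)] that(2-5) by simp
    show "S k $$ (a,j) = (\<Sum>l\<in>blk I k. L $$ (a,l) * R $$ (l,j))"
      if "k < ?nt" "a \<in> blk I k" "I ! k \<le> j" "j < n" for k a j
      using that by (intro block_row_index[OF L R S I]) (simp_all add: row)
    show "L $$ (i,l) = (\<Sum>c\<in>blk I k. S k $$ (i,c) * Rinv k c l)"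
      if "k < ?nt" "I ! k \<le> i" "i < n" "l \<in> blk I k" for k i l
      unfolding Rinv_def using that by (intro block_col_index[OF L S I _ RI]) (simp_all add: col)
    show "(\<Sum>i\<in>blk I k. cnj (L $$ (i,a)) * L $$ (i,b)) = (if a = b then 1 else 0)"
      if "k < ?nt" "a \<in> blk I k" "b \<in> blk I k" for k a b
      by (rule unitary_block_orthonormal_cols[OF L I that(1) unitary[OF that(1)] that(2,3)])
    show "L $$ (i,l) = 0" if "k < ?nt" "i < I ! k" "l \<in> blk I k" for k i l
      using that by (intro block_upper_zero_index[OF L I]) (simp_all add: L_upper)
  qed
  then show ?thesis by blast
qed

theorem theorem2p8:
  fixes A L R :: "complex mat" and I :: "nat list" and n :: nat
  assumes "A \<in> carrier_mat n n"
    and "is_blocking I n"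
    and "block_LU_unitary A I L R"
    and "A = L * R"
  shows "(invertible_mat A \<and> diag_dom_cols A \<longrightarrow>
            spec_norm L \<le> (real (max_block_size I) powr (3/2) + 1) * real (num_blocks I))
       \<and> (spd A \<longrightarrow> spec_norm L \<le> (sqrt (cond2 A) + 1) * real (num_blocks I))"
proof -
  obtain S Rinv where "block_LU n (num_blocks I) ((!) I) A L R S Rinv"
    using block_LU_unitary_imp_block_LU[OF assms(1-3)] by blast
  then interpret block_LU n "num_blocks I" "(!) I" A L R S Rinv .
  have "spec_norm L \<le> (real (max_block_size I) powr (3/2) + 1) * num_blocks I" if "diag_dom_cols A"
  proof -
    have "spec_norm L \<le> (1 + sqrt (max_block_size I)) * num_blocks I"
      using spec_norm_L_le_diag_dom[OF that block_size_le_max_block_size] .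
    also have "\<dots> \<le> (real (max_block_size I) powr (3/2) + 1) * num_blocks I"
      using sqrt_le_powr_three_halves[of "max_block_size I"] by (intro mult_right_mono) auto
    finally show ?thesis .
  qed
  moreover have "spec_norm L \<le> (sqrt (cond2 A) + 1) * num_blocks I" if "spd A"
    using spec_norm_L_le_spd[OF that] by (simp add: distrib_right add_increasing2)
  ultimately show ?thesis by blast
qed

end
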